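(* Let $C\ge 1$ and $D\ge 0$ be integers and let $L=\{1,\dots,C\}$ be a set of labels. Let $(p_s)_{s=1}^C$ be a probability distribution on $L$ with all $p_s>0$. For each $s\in L$ let $q_s$ be a probability distribution on $\{0,1,\dots,D\}$. Let $c_{sr}\ge 0$ ($s,r\in L$) be given with $\sum_{k=1}^C p_k c_{sk}>0$ for every $s$, and set $$z_{sr}=\frac{p_r c_{sr}}{\sum_{k=1}^C p_k c_{sk}}\qquad (s,r\in L),$$ so that each $(z_{s1},\dots,z_{sC})$ is a probability vector. Consider the random pair $(\ell,\mathcal{M})$ generated as follows: $\ell\in L$ has $P(\ell=s)=p_s$; conditionally on $\ell=s$, a degree $d\in\{0,\dots,D\}$ is drawn with probability $q_s(d)$, and then $d$ neighbor labels are drawn independently, each equal to $r$ with probability $z_{sr}$; $\mathcal{M}$ is the resulting unordered multiset of neighbor labels, equivalently the count vector $(n_1,\dots,n_C)$ with $n_k$ the number of neighbor labels equal to $k$ (so $\sum_k n_k=d$). Thus $$P(\mathcal{M}=(n_1,\dots,n_C)\mid \ell=s)=q_s(d)\,\frac{d!}{\prod_{k=1}^C n_k!}\prod_{k=1}^C z_{sk}^{n_k},\qquad d=\textstyle\sum_k n_k.$$ (This is the model of a labelled random graph in which a node with label $r$ connects to a node with label $s$ with probability $c_{sr}$, nodes with label $s$ have degree distribution $q_s$, and the number of nodes is much larger than the maximum degree $D$, so that neighbor labels of a node with label $s$ are i.i.d. with law $z_{s\cdot}$.) Then the mutual information (in nats) between $\ell$ and $\mathcal{M}$ satisfies $$MI(\ell;\mathcal{M})\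 \ge\ NIC:=-\sum_{s=1}^C p_s\ln\!\left(\sum_{r=1}^C p_r\sum_{d=0}^{D}\sqrt{q_s(d)q_r(d)}\Big(\sum_{k=1}^C\sqrt{z_{sk}z_{rk}}\Big)^{d}\right).$$
   Context: $MI(X;Y)=H(Y)-H(Y\mid X)$ with natural logarithms. The quantity $NIC$ is called the Neighborhood Information Content; $p_s$ is the probability a node has label $s$, $c_{sr}$ the probability a node of label $r$ connects to a node of label $s$, $q_s$ the degree distribution of nodes with label $s$, and $z_{sr}$ equals the probability that a neighbor of a label-$s$ node has label $r$. *)

theory Defs
  imports Complex_Main "HOL-Library.Multiset"
begin

definition zz :: "nat \<Rightarrow> (nat \<Rightarrow> real) \<Rightarrow> (nat \<Rightarrow> nat \<Rightarrow> real) \<Rightarrow> nat \<Rightarrow> nat \<Rightarrow> real" where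
  "zz C p c s r = p r * c s r / (\<Sum>k\<in>{1..C}. p k * c s k)"

definition nbhds :: "nat \<Rightarrow> nat \<Rightarrow> nat multiset set" where
  "nbhds C D = {M. set_mset M \<subseteq> {1..C} \<and> size M \<le> D}"

definition condP :: "nat \<Rightarrow> (nat \<Rightarrow> real) \<Rightarrow> (nat \<Rightarrow> nat \<Rightarrow> real) \<Rightarrow> (nat \<Rightarrow> nat \<Rightarrow> real)
    \<Rightarrow> nat \<Rightarrow> nat multiset \<Rightarrow> real" where
  "condP C p q c s M = q s (size M) * (fact (size M) / (\<Prod>k\<in>{1..C}. fact (count M k)))
      * (\<Prod>k\<in>{1..C}. zz C p c s k ^ count M k)"

definition margP :: "nat \<Rightarrow> (nat \<Rightarrow> real) \<Rightarrow> (nat \<Rightarrow> nat \<Rightarrow> real) \<Rightarrow> (nat \<Rightarrow> nat \<Rightarrow> real)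
    \<Rightarrow> nat multiset \<Rightarrow> real" where
  "margP C p q c M = (\<Sum>s\<in>{1..C}. p s * condP C p q c s M)"

definition xlnx :: "real \<Rightarrow> real" where
  "xlnx x = (if x = 0 then 0 else x * ln x)"

text \<open>MI(l;M) = H(M) - H(M | l), natural logarithms.\<close>
definition MI :: "nat \<Rightarrow> nat \<Rightarrow> (nat \<Rightarrow> real) \<Rightarrow> (nat \<Rightarrow> nat \<Rightarrow> real) \<Rightarrow> (nat \<Rightarrow> nat \<Rightarrow> real) \<Rightarrow> real" where
  "MI C D p q c =
     (- (\<Sum>M\<in>nbhds C D. xlnx (margP C p q c M)))
     - (- (\<Sum>s\<in>{1..C}. p s * (\<Sum>M\<in>nbhds C D. xlnx (condP C p q c s M))))"

definition NIC :: "nat \<Rightarrow> nat \<Rightarrow> (nat \<Rightarrow> real) \<Rightarrow> (nat \<Rightarrow> nat \<Rightarrow> real) \<Rightarrow> (nat \<Rightarrow> nat \<Rightarrow> real) \<Rightarrow> real" where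
  "NIC C D p q c = - (\<Sum>s\<in>{1..C}. p s * ln (\<Sum>r\<in>{1..C}. p r *
      (\<Sum>d\<in>{0..D}. sqrt (q s d * q r d) *
         (\<Sum>k\<in>{1..C}. sqrt (zz C p c s k * zz C p c r k)) ^ d)))"

end

theory Submission
  imports Defs "HOL-Combinatorics.Multiset_Permutations"
begin

(* Let P_s be the law of the neighbourhood given label s, Pbar = sum_s p_s P_s its marginal, and
   F(M) = sum_r p_r sqrt (P_r M).  Minus the mutual information is sum_s p_s sum_M P_s ln (Pbar / P_s),
   and ln (Pbar / P_s) = ln (Pbar / (sqrt P_s F)) + ln (sqrt P_s F / P_s).  By concavity of ln, the
   first part averages to at most 0 over the labels for each fixed M, and the second to at most
   ln (sum_M sqrt P_s F) = ln (sum_r p_r sum_M sqrt (P_s P_r)) over M for each fixed s.  The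
   multinomial theorem evaluates these Bhattacharyya coefficients to the brackets in NIC. *)

lemma ln_weighted_sum_le:
  fixes w b :: "'i \<Rightarrow> real"
  assumes "finite I"
    and w_nonneg: "\<And>i. i \<in> I \<Longrightarrow> 0 \<le> w i"
    and b_pos: "\<And>i. i \<in> I \<Longrightarrow> 0 < w i \<Longrightarrow> 0 < b i"
  shows "(\<Sum>i\<in>I. w i * ln (b i)) \<le> (\<Sum>i\<in>I. w i) * ln ((\<Sum>i\<in>I. w i * b i) / (\<Sum>i\<in>I. w i))"
proof (cases "\<forall>i\<in>I. w i = 0")
  case True
  then show ?thesis by simp
next
  case False
  define W B where "W = (\<Sum>i\<in>I. w i)" and "B = (\<Sum>i\<in>I. w i * b i)"
  obtain j where j: "j \<in> I" "0 < w j"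
    using False w_nonneg by force
  have wb_nonneg: "0 \<le> w i * b i" if "i \<in> I" for i
    using w_nonneg[OF that] b_pos[OF that] by (cases "w i = 0") auto
  have "0 < w j" "w j \<le> W"
    using j w_nonneg \<open>finite I\<close> by (auto simp: W_def intro: member_le_sum)
  moreover have "0 < w j * b j" "w j * b j \<le> B"
    using j b_pos wb_nonneg \<open>finite I\<close> by (auto simp: B_def intro: member_le_sum)
  ultimately have "0 < W" "0 < B" by linarith+
  have pointwise: "w i * ln (b i) - w i * ln (B / W) \<le> w i * b i * (W / B) - w i" if "i \<in> I" for i
  proof (cases "w i = 0")
    case False
    then have "0 < w i" "0 < b i" using w_nonneg b_pos that by force+
    have "w i * ln (b i) - w i * ln (B / W) = w i * ln (b i * (W / B))"
      using \<open>0 < b i\<close> \<open>0 < W\<close> \<open>0 < B\<close> by (simp add: ln_mult ln_div algebra_simps)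
    also have "\<dots> \<le> w i * (b i * (W / B) - 1)"
      using \<open>0 < w i\<close> \<open>0 < b i\<close> \<open>0 < W\<close> \<open>0 < B\<close> by (intro mult_left_mono ln_le_minus_one) auto
    finally show ?thesis by (simp add: algebra_simps)
  qed simp
  have "(\<Sum>i\<in>I. w i * ln (b i)) - W * ln (B / W) \<le> (\<Sum>i\<in>I. w i * b i * (W / B) - w i)"
    using sum_mono[OF pointwise] by (simp add: W_def sum_subtractf sum_distrib_right)
  also have "\<dots> = 0"
  proof -
    have "(\<Sum>i\<in>I. w i * b i * (W / B)) = B * (W / B)"
      by (simp only: B_def sum_distrib_right)
    then show ?thesis
      using \<open>0 < B\<close> by (simp add: sum_subtractf W_def)
  qed
  finally show ?thesis by (simp add: W_def B_def)
qed

lemma mixture_ln_ratio_nonpos: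
  fixes p x :: "'s \<Rightarrow> real"
  assumes "finite S" "\<And>s. s \<in> S \<Longrightarrow> 0 \<le> p s" "\<And>s. s \<in> S \<Longrightarrow> 0 \<le> x s"
  shows "(\<Sum>s\<in>S. p s * x s * ln ((\<Sum>r\<in>S. p r * x r) / (sqrt (x s) * (\<Sum>r\<in>S. p r * sqrt (x r))))) \<le> 0"
proof -
  define X F where "X = (\<Sum>r\<in>S. p r * x r)" and "F = (\<Sum>r\<in>S. p r * sqrt (x r))"
  have "(\<Sum>s\<in>S. p s * x s * ln (X / (sqrt (x s) * F)))
      \<le> (\<Sum>s\<in>S. p s * x s) * ln ((\<Sum>s\<in>S. p s * x s * (X / (sqrt (x s) * F))) / (\<Sum>s\<in>S. p s * x s))"
  proof (rule ln_weighted_sum_le)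
    fix s assume "s \<in> S" "0 < p s * x s"
    then have "0 < p s" "0 < x s"
      using assms(2,3)[OF \<open>s \<in> S\<close>] by (auto simp: zero_less_mult_iff)
    moreover have "p s * x s \<le> X" "p s * sqrt (x s) \<le> F"
      using \<open>s \<in> S\<close> assms unfolding X_def F_def by (auto intro!: member_le_sum)
    ultimately show "0 < X / (sqrt (x s) * F)"
      by (smt (verit) divide_pos_pos mult_pos_pos real_sqrt_gt_zero)
  qed (use assms in auto)
  also have "(\<Sum>s\<in>S. p s * x s * (X / (sqrt (x s) * F))) = F * X / F"
  proof -
    have "p s * x s * (X / (sqrt (x s) * F)) = p s * sqrt (x s) * X / F" if "s \<in> S" for s
    proof -
      have "p s * x s * (X / (sqrt (x s) * F)) = p s * (x s / sqrt (x s)) * X / F"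
        by (simp add: divide_divide_eq_left')
      then show ?thesis
        using assms(3)[OF that] by (simp add: real_div_sqrt)
    qed
    then show ?thesis
      by (simp add: F_def sum_divide_distrib sum_distrib_right)
  qed
  also have "(\<Sum>s\<in>S. p s * x s) * ln ((F * X / F) / (\<Sum>s\<in>S. p s * x s)) = 0"
    by (cases "F = 0"; cases "X = 0") (simp_all add: X_def)
  finally show ?thesis by (simp add: X_def F_def)
qed

lemma sum_ln_sqrt_ratio_le:
  fixes x F :: "'m \<Rightarrow> real"
  assumes "finite N" "\<And>M. M \<in> N \<Longrightarrow> 0 \<le> x M" "(\<Sum>M\<in>N. x M) = 1"
    and "\<And>M. M \<in> N \<Longrightarrow> 0 < x M \<Longrightarrow> 0 < F M"
  shows "(\<Sum>M\<in>N. x M * ln (sqrt (x M) * F M / x M)) \<le> ln (\<Sum>M\<in>N. sqrt (x M) * F M)"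
proof -
  have "(\<Sum>M\<in>N. x M * ln (sqrt (x M) * F M / x M))
      \<le> (\<Sum>M\<in>N. x M) * ln ((\<Sum>M\<in>N. x M * (sqrt (x M) * F M / x M)) / (\<Sum>M\<in>N. x M))"
    using assms by (intro ln_weighted_sum_le) (auto intro!: divide_pos_pos)
  also have "(\<Sum>M\<in>N. x M * (sqrt (x M) * F M / x M)) = (\<Sum>M\<in>N. sqrt (x M) * F M)"
    by (intro sum.cong) auto
  finally show ?thesis
    using assms(3) by simp
qed

lemma mutual_information_eq_sum_ln_ratio:
  fixes p :: "'s \<Rightarrow> real" and P :: "'s \<Rightarrow> 'm \<Rightarrow> real"
  shows "(- (\<Sum>M\<in>N. xlnx (\<Sum>s\<in>S. p s * P s M))) - (- (\<Sum>s\<in>S. p s * (\<Sum>M\<in>N. xlnx (P s M))))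
    = - (\<Sum>s\<in>S. p s * (\<Sum>M\<in>N. P s M * (ln (\<Sum>r\<in>S. p r * P r M) - ln (P s M))))"
proof -
  have xlnx: "xlnx x = x * ln x" for x
    by (simp add: xlnx_def)
  show ?thesis
    unfolding xlnx
    by (simp add: sum_distrib_left sum_distrib_right sum_subtractf algebra_simps sum.swap[of _ N S])
qed

lemma mutual_information_ge_bhattacharyya:
  fixes p :: "'s \<Rightarrow> real" and P :: "'s \<Rightarrow> 'm \<Rightarrow> real"
  assumes "finite S" "finite N"
    and p_nonneg: "\<And>s. s \<in> S \<Longrightarrow> 0 \<le> p s"
    and P_nonneg: "\<And>s M. s \<in> S \<Longrightarrow> M \<in> N \<Longrightarrow> 0 \<le> P s M"
    and P_sum: "\<And>s. s \<in> S \<Longrightarrow> (\<Sum>M\<in>N. P s M) = 1"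
  shows "- (\<Sum>s\<in>S. p s * ln (\<Sum>r\<in>S. p r * (\<Sum>M\<in>N. sqrt (P s M * P r M))))
    \<le> (- (\<Sum>M\<in>N. xlnx (\<Sum>s\<in>S. p s * P s M))) - (- (\<Sum>s\<in>S. p s * (\<Sum>M\<in>N. xlnx (P s M))))"
proof -
  define Pbar F where "Pbar M = (\<Sum>s\<in>S. p s * P s M)" and "F M = (\<Sum>r\<in>S. p r * sqrt (P r M))" for M
  have F_ge: "p s * sqrt (P s M) \<le> F M" and Pbar_ge: "p s * P s M \<le> Pbar M"
    if "s \<in> S" "M \<in> N" for s M
    using that p_nonneg P_nonneg \<open>finite S\<close> unfolding F_def Pbar_def by (auto intro!: member_le_sum)
  have split: "p s * (P s M * (ln (Pbar M) - ln (P s M)))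
      = p s * P s M * ln (Pbar M / (sqrt (P s M) * F M)) + p s * (P s M * ln (sqrt (P s M) * F M / P s M))"
    if "s \<in> S" "M \<in> N" for s M
  proof (cases "p s * P s M = 0")
    case False
    then have "0 < p s" "0 < P s M"
      using p_nonneg[OF that(1)] P_nonneg[OF that] by auto
    then have "0 < F M" "0 < Pbar M"
      using F_ge[OF that] Pbar_ge[OF that] by (smt (verit) mult_pos_pos real_sqrt_gt_zero)+
    then show ?thesis
      using \<open>0 < P s M\<close> by (simp add: ln_div ln_mult algebra_simps)
  qed auto
  have by_label: "(\<Sum>s\<in>S. p s * P s M * ln (Pbar M / (sqrt (P s M) * F M))) \<le> 0" if "M \<in> N" for M
    unfolding Pbar_def F_def using that \<open>finite S\<close> p_nonneg P_nonneg by (intro mixture_ln_ratio_nonpos) auto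
  have by_neighbourhood: "p s * (\<Sum>M\<in>N. P s M * ln (sqrt (P s M) * F M / P s M))
      \<le> p s * ln (\<Sum>M\<in>N. sqrt (P s M) * F M)" if "s \<in> S" for s
  proof (cases "p s = 0")
    case False
    have "0 < F M" if "M \<in> N" "0 < P s M" for M
      using F_ge[OF \<open>s \<in> S\<close> that(1)] p_nonneg[OF \<open>s \<in> S\<close>] False that(2)
      by (smt (verit) mult_pos_pos real_sqrt_gt_zero)
    then show ?thesis
      using \<open>finite N\<close> P_nonneg P_sum that p_nonneg
      by (intro mult_left_mono sum_ln_sqrt_ratio_le) auto
  qed simp
  have bhattacharyya: "(\<Sum>M\<in>N. sqrt (P s M) * F M) = (\<Sum>r\<in>S. p r * (\<Sum>M\<in>N. sqrt (P s M * P r M)))"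
    if "s \<in> S" for s
    using that P_nonneg unfolding F_def
    by (simp add: sum_distrib_left sum_distrib_right real_sqrt_mult algebra_simps) (rule sum.swap)
  have "(\<Sum>s\<in>S. p s * (\<Sum>M\<in>N. P s M * (ln (Pbar M) - ln (P s M))))
      = (\<Sum>M\<in>N. \<Sum>s\<in>S. p s * P s M * ln (Pbar M / (sqrt (P s M) * F M)))
        + (\<Sum>s\<in>S. p s * (\<Sum>M\<in>N. P s M * ln (sqrt (P s M) * F M / P s M)))"
  proof -
    have "(\<Sum>s\<in>S. p s * (\<Sum>M\<in>N. P s M * (ln (Pbar M) - ln (P s M))))
        = (\<Sum>s\<in>S. \<Sum>M\<in>N. p s * P s M * ln (Pbar M / (sqrt (P s M) * F M))
            + p s * (P s M * ln (sqrt (P s M) * F M / P s M)))"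
      by (simp add: sum_distrib_left split)
    then show ?thesis
      by (simp add: sum.distrib sum.swap[of _ S N] sum_distrib_left)
  qed
  also have "\<dots> \<le> 0 + (\<Sum>s\<in>S. p s * ln (\<Sum>M\<in>N. sqrt (P s M) * F M))"
    by (rule add_mono[OF sum_nonpos[OF by_label] sum_mono[OF by_neighbourhood]])
  finally show ?thesis
    unfolding mutual_information_eq_sum_ln_ratio by (simp add: Pbar_def bhattacharyya)
qed

lemma power_sum_eq_sum_lists:
  fixes a :: "'a \<Rightarrow> 'b::comm_semiring_1"
  assumes "finite K"
  shows "(\<Sum>k\<in>K. a k) ^ n = (\<Sum>xs\<in>{xs. set xs \<subseteq> K \<and> length xs = n}. prod_list (map a xs))"
proof (induction n)
  case 0
  have "{xs. set xs \<subseteq> K \<and> length xs = 0} = {[]}" by auto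
  then show ?case by simp
next
  case (Suc n)
  let ?L = "\<lambda>n. {xs. set xs \<subseteq> K \<and> length xs = n}"
  have cons_image: "?L (Suc n) = (\<lambda>(x, xs). x # xs) ` (K \<times> ?L n)"
    by (auto simp: length_Suc_conv)
  have "inj_on (\<lambda>(x, xs). x # xs) (K \<times> ?L n)"
    by (auto simp: inj_on_def)
  then have "(\<Sum>xs\<in>?L (Suc n). prod_list (map a xs)) = (\<Sum>(k, xs)\<in>K \<times> ?L n. a k * prod_list (map a xs))"
    unfolding cons_image by (subst sum.reindex) (auto intro!: sum.cong)
  also have "\<dots> = (\<Sum>k\<in>K. a k) * (\<Sum>xs\<in>?L n. prod_list (map a xs))"
    by (simp add: sum.cartesian_product sum_product)
  finally show ?case
    using Suc by simp
qed

lemma of_nat_card_permutations_of_multiset: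
  assumes "finite K" "set_mset M \<subseteq> K"
  shows "of_nat (card (permutations_of_multiset M))
    = (fact (size M) / (\<Prod>k\<in>K. fact (count M k)) :: 'a::field_char_0)"
proof -
  have "(\<Prod>k\<in>K. fact (count M k) :: nat) = (\<Prod>k\<in>set_mset M. fact (count M k))"
    using assms by (intro prod.mono_neutral_right) (auto simp: not_in_iff)
  then have "card (permutations_of_multiset M) * (\<Prod>k\<in>K. fact (count M k)) = fact (size M)"
    using card_permutations_of_multiset_aux[of M] by simp
  from arg_cong[OF this, of "of_nat :: nat \<Rightarrow> 'a"]
  have "of_nat (card (permutations_of_multiset M)) * (\<Prod>k\<in>K. fact (count M k) :: 'a) = fact (size M)"
    by simp
  moreover have "(\<Prod>k\<in>K. fact (count M k) :: 'a) \<noteq> 0"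
    using assms(1) by simp
  ultimately show ?thesis
    by (simp add: field_simps)
qed

lemma multinomial_theorem:
  fixes a :: "'a \<Rightarrow> 'b::field_char_0"
  assumes "finite K"
  shows "(\<Sum>k\<in>K. a k) ^ n = (\<Sum>M\<in>multisets_of_size K n.
            fact (size M) / (\<Prod>k\<in>K. fact (count M k)) * (\<Prod>k\<in>K. a k ^ count M k))"
proof -
  let ?L = "{xs. set xs \<subseteq> K \<and> length xs = n}"
  have finite_L: "finite ?L"
    using assms by (rule finite_lists_length_eq)
  have mset_image: "mset ` ?L = multisets_of_size K n"
    by (auto simp: multisets_of_size_def image_iff) (metis ex_mset set_mset_mset size_mset)
  have fibre: "{xs \<in> ?L. mset xs = M} = permutations_of_multiset M" if "M \<in> multisets_of_size K n" for M
    using that by (auto simp: permutations_of_multiset_def multisets_of_size_def)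
  have prod_list_eq: "prod_list (map a xs) = (\<Prod>k\<in>K. a k ^ count (mset xs) k)" if "set xs \<subseteq> K" for xs
  proof -
    have "prod_list (map a xs) = (\<Prod>k\<in>set_mset (mset xs). a k ^ count (mset xs) k)"
      by (metis image_prod_mset_multiplicity mset_map prod_mset_prod_list)
    also have "\<dots> = (\<Prod>k\<in>K. a k ^ count (mset xs) k)"
      using that assms by (intro prod.mono_neutral_left) (auto simp flip: count_mset_0_iff)
    finally show ?thesis .
  qed
  have "(\<Sum>k\<in>K. a k) ^ n = (\<Sum>M\<in>mset ` ?L. \<Sum>xs\<in>{xs \<in> ?L. mset xs = M}. prod_list (map a xs))"
    unfolding power_sum_eq_sum_lists[OF assms]
    by (rule sum.group[symmetric]) (simp_all add: finite_L)
  also have "\<dots> = (\<Sum>M\<in>multisets_of_size K n.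
      of_nat (card (permutations_of_multiset M)) * (\<Prod>k\<in>K. a k ^ count M k))"
  proof (rule sum.cong)
    fix M assume M: "M \<in> multisets_of_size K n"
    have "prod_list (map a xs) = (\<Prod>k\<in>K. a k ^ count M k)" if "xs \<in> permutations_of_multiset M" for xs
    proof -
      have "mset xs = M"
        using that by (rule permutations_of_multisetD)
      then show ?thesis
        using M prod_list_eq[of xs] by (auto simp: multisets_of_size_def)
    qed
    then show "(\<Sum>xs\<in>{xs \<in> ?L. mset xs = M}. prod_list (map a xs))
        = of_nat (card (permutations_of_multiset M)) * (\<Prod>k\<in>K. a k ^ count M k)"
      unfolding fibre[OF M] by simp
  qed (rule mset_image)
  also have "\<dots> = (\<Sum>M\<in>multisets_of_size K n.
      fact (size M) / (\<Prod>k\<in>K. fact (count M k)) * (\<Prod>k\<in>K. a k ^ count M k))"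
    using assms by (intro sum.cong refl) (simp add: of_nat_card_permutations_of_multiset multisets_of_size_def)
  finally show ?thesis .
qed

lemma nbhds_eq_UN_multisets_of_size: "nbhds C D = (\<Union>d\<in>{0..D}. multisets_of_size {1..C} d)"
  by (auto simp: nbhds_def multisets_of_size_def)

lemma finite_nbhds: "finite (nbhds C D)"
  by (simp add: nbhds_eq_UN_multisets_of_size finite_multisets_of_size)

lemma sum_nbhds:
  "(\<Sum>M\<in>nbhds C D. g M) = (\<Sum>d\<in>{0..D}. \<Sum>M\<in>multisets_of_size {1..C} d. g M)"
  unfolding nbhds_eq_UN_multisets_of_size
  by (intro sum.UNION_disjoint ballI finite_multisets_of_size finite_atLeastAtMost)
    (auto simp: multisets_of_size_def)

lemma sum_zz:
  assumes "(\<Sum>k\<in>{1..C}. p k * c s k) \<noteq> 0"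
  shows "(\<Sum>k\<in>{1..C}. zz C p c s k) = 1"
  using assms by (simp add: zz_def flip: sum_divide_distrib)

lemma condP_nonneg:
  assumes "0 \<le> q s (size M)" "\<And>k. k \<in> {1..C} \<Longrightarrow> 0 \<le> zz C p c s k"
  shows "0 \<le> condP C p q c s M"
  using assms unfolding condP_def by (auto intro!: mult_nonneg_nonneg divide_nonneg_nonneg prod_nonneg)

lemma real_sqrt_prod: "sqrt (\<Prod>x\<in>A. f x) = (\<Prod>x\<in>A. sqrt (f x))"
  by (induction A rule: infinite_finite_induct) (auto simp: real_sqrt_mult)

lemma sqrt_condP_mult:
  assumes "0 \<le> q s (size M)" "0 \<le> q r (size M)"
    and "\<And>k. k \<in> {1..C} \<Longrightarrow> 0 \<le> zz C p c s k" "\<And>k. k \<in> {1..C} \<Longrightarrow> 0 \<le> zz C p c r k"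
  shows "sqrt (condP C p q c s M * condP C p q c r M)
    = sqrt (q s (size M) * q r (size M)) * (fact (size M) / (\<Prod>k\<in>{1..C}. fact (count M k))
        * (\<Prod>k\<in>{1..C}. sqrt (zz C p c s k * zz C p c r k) ^ count M k))"
proof -
  define m where "m = fact (size M) / (\<Prod>k\<in>{1..C}. fact (count M k) :: real)"
  have "0 \<le> m"
    by (simp add: m_def prod_nonneg)
  have "condP C p q c s M * condP C p q c r M
      = (q s (size M) * q r (size M)) * m\<^sup>2 * (\<Prod>k\<in>{1..C}. (zz C p c s k * zz C p c r k) ^ count M k)"
    by (simp add: condP_def m_def power_mult_distrib prod.distrib power2_eq_square algebra_simps)
  then show ?thesis
    using \<open>0 \<le> m\<close> assms
    by (simp add: m_def real_sqrt_mult real_sqrt_power real_sqrt_prod)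
qed

lemma sum_sqrt_condP_mult:
  assumes "\<And>d. d \<in> {0..D} \<Longrightarrow> 0 \<le> q s d" "\<And>d. d \<in> {0..D} \<Longrightarrow> 0 \<le> q r d"
    and "\<And>k. k \<in> {1..C} \<Longrightarrow> 0 \<le> zz C p c s k" "\<And>k. k \<in> {1..C} \<Longrightarrow> 0 \<le> zz C p c r k"
  shows "(\<Sum>M\<in>nbhds C D. sqrt (condP C p q c s M * condP C p q c r M))
    = (\<Sum>d\<in>{0..D}. sqrt (q s d * q r d) * (\<Sum>k\<in>{1..C}. sqrt (zz C p c s k * zz C p c r k)) ^ d)"
  unfolding sum_nbhds
proof (rule sum.cong)
  fix d assume "d \<in> {0..D}"
  have "sqrt (condP C p q c s M * condP C p q c r M)
      = sqrt (q s d * q r d) * (fact (size M) / (\<Prod>k\<in>{1..C}. fact (count M k))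
        * (\<Prod>k\<in>{1..C}. sqrt (zz C p c s k * zz C p c r k) ^ count M k))"
    if "M \<in> multisets_of_size {1..C} d" for M
    using that \<open>d \<in> {0..D}\<close> assms
    by (subst sqrt_condP_mult) (auto simp: multisets_of_size_def)
  then show "(\<Sum>M\<in>multisets_of_size {1..C} d. sqrt (condP C p q c s M * condP C p q c r M))
      = sqrt (q s d * q r d) * (\<Sum>k\<in>{1..C}. sqrt (zz C p c s k * zz C p c r k)) ^ d"
    by (simp add: multinomial_theorem sum_distrib_left)
qed simp

lemma sum_condP:
  assumes "\<And>d. d \<in> {0..D} \<Longrightarrow> 0 \<le> q s d" "(\<Sum>d\<in>{0..D}. q s d) = 1"
    and "\<And>k. k \<in> {1..C} \<Longrightarrow> 0 \<le> zz C p c s k" "(\<Sum>k\<in>{1..C}. zz C p c s k) = 1"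
  shows "(\<Sum>M\<in>nbhds C D. condP C p q c s M) = 1"
proof -
  have "0 \<le> condP C p q c s M" if "M \<in> nbhds C D" for M
    using that assms(1,3) by (intro condP_nonneg) (auto simp: nbhds_def)
  then have "(\<Sum>M\<in>nbhds C D. condP C p q c s M)
      = (\<Sum>M\<in>nbhds C D. sqrt (condP C p q c s M * condP C p q c s M))"
    by simp
  also have "\<dots> = (\<Sum>d\<in>{0..D}. sqrt (q s d * q s d) * (\<Sum>k\<in>{1..C}. sqrt (zz C p c s k * zz C p c s k)) ^ d)"
    using assms(1,3) by (intro sum_sqrt_condP_mult)
  also have "\<dots> = (\<Sum>d\<in>{0..D}. q s d * (\<Sum>k\<in>{1..C}. zz C p c s k) ^ d)"
    using assms(1,3) by (intro sum.cong refl arg_cong2[where f = "\<lambda>x y. x * y ^ d" for d]) auto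
  finally show ?thesis
    using assms(2,4) by simp
qed

theorem theorem1:
  fixes C D :: nat and p :: "nat \<Rightarrow> real" and q c :: "nat \<Rightarrow> nat \<Rightarrow> real"
  assumes "C \<ge> 1"
    and "\<And>s. s \<in> {1..C} \<Longrightarrow> p s > 0"
    and "(\<Sum>s\<in>{1..C}. p s) = 1"
    and "\<And>s d. s \<in> {1..C} \<Longrightarrow> d \<in> {0..D} \<Longrightarrow> q s d \<ge> 0"
    and "\<And>s. s \<in> {1..C} \<Longrightarrow> (\<Sum>d\<in>{0..D}. q s d) = 1"
    and "\<And>s r. s \<in> {1..C} \<Longrightarrow> r \<in> {1..C} \<Longrightarrow> c s r \<ge> 0"
    and "\<And>s. s \<in> {1..C} \<Longrightarrow> (\<Sum>k\<in>{1..C}. p k * c s k) > 0"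
  shows "MI C D p q c \<ge> NIC C D p q c"
proof -
  let ?P = "condP C p q c"
  have zz_nonneg: "0 \<le> zz C p c s k" if "s \<in> {1..C}" "k \<in> {1..C}" for s k
    using that assms(2,6,7) by (simp add: zz_def less_imp_le)
  have bhattacharyya: "(\<Sum>M\<in>nbhds C D. sqrt (?P s M * ?P r M))
      = (\<Sum>d\<in>{0..D}. sqrt (q s d * q r d) * (\<Sum>k\<in>{1..C}. sqrt (zz C p c s k * zz C p c r k)) ^ d)"
    if "s \<in> {1..C}" "r \<in> {1..C}" for s r
    using that assms(4) zz_nonneg by (intro sum_sqrt_condP_mult) auto
  have "NIC C D p q c = - (\<Sum>s\<in>{1..C}. p s * ln (\<Sum>r\<in>{1..C}. p r *
      (\<Sum>M\<in>nbhds C D. sqrt (?P s M * ?P r M))))"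
    unfolding NIC_def by (simp add: bhattacharyya)
  also have "\<dots> \<le> MI C D p q c"
    unfolding MI_def margP_def
  proof (rule mutual_information_ge_bhattacharyya)
    fix s assume s: "s \<in> {1..C}"
    show "(\<Sum>M\<in>nbhds C D. ?P s M) = 1"
      using s assms(4,5) assms(7)[OF s] zz_nonneg by (intro sum_condP sum_zz) auto
    show "0 \<le> ?P s M" if "M \<in> nbhds C D" for M
      using s that assms(4) zz_nonneg by (intro condP_nonneg) (auto simp: nbhds_def)
  qed (use assms(2) finite_nbhds in \<open>auto intro: less_imp_le\<close>)
  finally show ?thesis .
qed
end
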